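(* Let $I$ be a fuzzy implication satisfying $I(1,y)=y$ for all $y\in[0,1]$, and let $A$ be an aggregation function having $1$ as a left neutral element ($A(1,x)=x$ for all $x$). Then $I$ satisfies (A5) with $A$ if and only if for all nonempty sets $U,V$, all normal fuzzy sets $D$ on $U$ and $B$ on $V$, and all $x\in U$, $y\in V$, one has $A(D(x),I(D(x),B(y)))\le B(y)$.
   Context: Aggregation function: $A:[0,1]^2\to[0,1]$ non-decreasing in each variable with $A(0,0)=0$, $A(1,1)=1$. Fuzzy implication: $I:[0,1]^2\to[0,1]$ non-increasing in the first and non-decreasing in the second variable with $I(0,0)=I(1,1)=1$, $I(1,0)=0$. A fuzzy set on a nonempty set $U$ is a map $U\to[0,1]$, normal if it attains $1$. "$I$ satisfies (A5) with $A$" means: for all nonempty sets $U,V$, all normal fuzzy sets $D$ on $U$, $B$ on $V$ and every $y\in V$, $\sup_{x\in U}A(D(x),I(D(x),B(y)))=B(y)$. *)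

theory Defs
  imports Main "HOL.Real"
begin

definition unit_interval :: "real set" where
  "unit_interval = {0..1}"

definition aggregation_function :: "(real \<Rightarrow> real \<Rightarrow> real) \<Rightarrow> bool" where
  "aggregation_function A \<longleftrightarrow>
     (\<forall>x\<in>{0..1}. \<forall>y\<in>{0..1}. A x y \<in> {0..1}) \<and>
     (\<forall>x1\<in>{0..1}. \<forall>x2\<in>{0..1}. \<forall>y\<in>{0..1}. x1 \<le> x2 \<longrightarrow> A x1 y \<le> A x2 y) \<and>
     (\<forall>x\<in>{0..1}. \<forall>y1\<in>{0..1}. \<forall>y2\<in>{0..1}. y1 \<le> y2 \<longrightarrow> A x y1 \<le> A x y2) \<and>
     A 0 0 = 0 \<and> A 1 1 = 1"

definition fuzzy_implication :: "(real \<Rightarrow> real \<Rightarrow> real) \<Rightarrow> bool" where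
  "fuzzy_implication I \<longleftrightarrow>
     (\<forall>x\<in>{0..1}. \<forall>y\<in>{0..1}. I x y \<in> {0..1}) \<and>
     (\<forall>x1\<in>{0..1}. \<forall>x2\<in>{0..1}. \<forall>y\<in>{0..1}. x1 \<le> x2 \<longrightarrow> I x2 y \<le> I x1 y) \<and>
     (\<forall>x\<in>{0..1}. \<forall>y1\<in>{0..1}. \<forall>y2\<in>{0..1}. y1 \<le> y2 \<longrightarrow> I x y1 \<le> I x y2) \<and>
     I 0 0 = 1 \<and> I 1 1 = 1 \<and> I 1 0 = 0"

definition fuzzy_set_on :: "'a set \<Rightarrow> ('a \<Rightarrow> real) \<Rightarrow> bool" where
  "fuzzy_set_on U D \<longleftrightarrow> (\<forall>x\<in>U. D x \<in> {0..1})"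

definition normal_fuzzy_set_on :: "'a set \<Rightarrow> ('a \<Rightarrow> real) \<Rightarrow> bool" where
  "normal_fuzzy_set_on U D \<longleftrightarrow> fuzzy_set_on U D \<and> (\<exists>x\<in>U. D x = 1)"

text \<open>(A5) relative to universes of types 'a and 'b: all nonempty U :: 'a set, V :: 'b set.\<close>
definition satisfies_A5 ::
  "'a itself \<Rightarrow> 'b itself \<Rightarrow> (real \<Rightarrow> real \<Rightarrow> real) \<Rightarrow> (real \<Rightarrow> real \<Rightarrow> real) \<Rightarrow> bool" where
  "satisfies_A5 _ _ I A \<longleftrightarrow>
     (\<forall>(U::'a set) (V::'b set) D B y.
        U \<noteq> {} \<longrightarrow> V \<noteq> {} \<longrightarrow> normal_fuzzy_set_on U D \<longrightarrow> normal_fuzzy_set_on V B \<longrightarrow>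
        y \<in> V \<longrightarrow> (SUP x\<in>U. A (D x) (I (D x) (B y))) = B y)"

end

theory Submission
  imports Defs
begin

text \<open>Since 1 is left neutral for both \<open>A\<close> and \<open>I\<close>, the value \<open>A (D x) (I (D x) (B y))\<close>
  equals \<open>B y\<close> wherever \<open>D x = 1\<close>, and normality of \<open>D\<close> provides such an \<open>x\<close>. So the
  supremum over \<open>U\<close> is attained, and it equals \<open>B y\<close> exactly when \<open>B y\<close> bounds every value.\<close>

lemma cSUP_eq_attained_iff:
  fixes f :: "'a \<Rightarrow> 'b::conditionally_complete_lattice"
  assumes "x0 \<in> U" "f x0 = b" "bdd_above (f ` U)"
  shows "(SUP x\<in>U. f x) = b \<longleftrightarrow> (\<forall>x\<in>U. f x \<le> b)"
proof
  assume "(SUP x\<in>U. f x) = b"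
  then show "\<forall>x\<in>U. f x \<le> b"
    using cSUP_upper[OF _ assms(3)] by metis
next
  assume "\<forall>x\<in>U. f x \<le> b"
  then show "(SUP x\<in>U. f x) = b"
    using assms(1,2) by (intro cSup_eq_maximum) auto
qed

lemma normal_fuzzy_set_on_in_unit:
  "normal_fuzzy_set_on U D \<Longrightarrow> x \<in> U \<Longrightarrow> D x \<in> {0..1}"
  unfolding normal_fuzzy_set_on_def fuzzy_set_on_def by blast

lemma aggregation_implication_in_unit:
  assumes "fuzzy_implication I" "aggregation_function A"
    and "a \<in> {0..1}" "b \<in> {0..1}"
  shows "A a (I a b) \<in> {0..1}"
proof -
  have "I a b \<in> {0..1}"
    using assms(1,3,4) unfolding fuzzy_implication_def by blast
  then show ?thesis
    using assms(2,3) unfolding aggregation_function_def by blast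
qed

lemma SUP_aggregation_implication_eq_iff:
  assumes "fuzzy_implication I" "\<forall>y\<in>{0..1}. I 1 y = y"
    and "aggregation_function A" "\<forall>x\<in>{0..1}. A 1 x = x"
    and D: "normal_fuzzy_set_on U D" and "b \<in> {0..1}"
  shows "(SUP x\<in>U. A (D x) (I (D x) b)) = b \<longleftrightarrow> (\<forall>x\<in>U. A (D x) (I (D x) b) \<le> b)"
proof -
  obtain x0 where x0: "x0 \<in> U" "D x0 = 1"
    using D unfolding normal_fuzzy_set_on_def by blast
  have bdd: "bdd_above ((\<lambda>x. A (D x) (I (D x) b)) ` U)"
    using aggregation_implication_in_unit[OF assms(1,3) normal_fuzzy_set_on_in_unit[OF D] assms(6)]
    by (intro bdd_aboveI2[where M = 1]) auto
  have attained: "A (D x0) (I (D x0) b) = b"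
    using x0(2) assms(2,4,6) by simp
  show ?thesis
    by (rule cSUP_eq_attained_iff[OF x0(1) attained bdd])
qed

theorem proposition3p9:
  fixes I A :: "real \<Rightarrow> real \<Rightarrow> real"
  assumes "fuzzy_implication I"
    and "\<forall>y\<in>{0..1}. I 1 y = y"
    and "aggregation_function A"
    and "\<forall>x\<in>{0..1}. A 1 x = x"
  shows "satisfies_A5 TYPE('a) TYPE('b) I A \<longleftrightarrow>
    (\<forall>(U::'a set) (V::'b set) D B x y.
        U \<noteq> {} \<longrightarrow> V \<noteq> {} \<longrightarrow> normal_fuzzy_set_on U D \<longrightarrow> normal_fuzzy_set_on V B \<longrightarrow>
        x \<in> U \<longrightarrow> y \<in> V \<longrightarrow> A (D x) (I (D x) (B y)) \<le> B y)"
  unfolding satisfies_A5_def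
proof (intro iffI allI impI)
  fix U :: "'a set" and V :: "'b set" and D B x y
  assume "\<forall>(U::'a set) (V::'b set) D B y. U \<noteq> {} \<longrightarrow> V \<noteq> {} \<longrightarrow>
      normal_fuzzy_set_on U D \<longrightarrow> normal_fuzzy_set_on V B \<longrightarrow> y \<in> V \<longrightarrow>
      (SUP x\<in>U. A (D x) (I (D x) (B y))) = B y"
    and "U \<noteq> {}" "V \<noteq> {}" and D: "normal_fuzzy_set_on U D"
    and B: "normal_fuzzy_set_on V B" and "x \<in> U" and y: "y \<in> V"
  then have "(SUP x\<in>U. A (D x) (I (D x) (B y))) = B y"
    by blast
  with \<open>x \<in> U\<close> show "A (D x) (I (D x) (B y)) \<le> B y"
    unfolding SUP_aggregation_implication_eq_iff[OF assms D normal_fuzzy_set_on_in_unit[OF B y]]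
    by blast
next
  fix U :: "'a set" and V :: "'b set" and D B y
  assume "\<forall>(U::'a set) (V::'b set) D B x y. U \<noteq> {} \<longrightarrow> V \<noteq> {} \<longrightarrow>
      normal_fuzzy_set_on U D \<longrightarrow> normal_fuzzy_set_on V B \<longrightarrow> x \<in> U \<longrightarrow> y \<in> V \<longrightarrow>
      A (D x) (I (D x) (B y)) \<le> B y"
    and "U \<noteq> {}" "V \<noteq> {}" and D: "normal_fuzzy_set_on U D"
    and B: "normal_fuzzy_set_on V B" and y: "y \<in> V"
  then show "(SUP x\<in>U. A (D x) (I (D x) (B y))) = B y"
    unfolding SUP_aggregation_implication_eq_iff[OF assms D normal_fuzzy_set_on_in_unit[OF B y]]
    by blast
qed

end
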